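(* Assume the standing hypotheses and definitions in the context. For any $(t_0,y_0)\in\mathbb{R}\times\mathbb{R}^n$, the function $t\mapsto G(t,Y(t,t_0,y_0))$ is a solution of the system $x'=A(t)x+f(t,x)$.
   Context: Standing hypotheses: $A:\mathbb{R}\to\mathbb{R}^{n\times n}$ is continuous and bounded, $T(t,s)$ is the evolution operator of $x'=A(t)x$. $\mu:\mathbb{R}\to(0,\infty)$ is an increasing differentiable growth rate: $\mu(0)=1$, $\lim_{t\to-\infty}\mu(t)=0$, $\lim_{t\to+\infty}\mu(t)=+\infty$. The system $x'=A(t)x$ admits an algebraic dichotomy: projections $P(s)$, $Q(s)=I-P(s)$, constants $K,\alpha>0$ with $T(t,s)P(s)=P(t)T(t,s)$, $\|T(t,s)P(s)\|\le K(\mu(t)/\mu(s))^{-\alpha}$ ($t\ge s$), $\|T(t,s)Q(s)\|\le K(\mu(s)/\mu(t))^{-\alpha}$ ($t\le s$). $f:\mathbb{R}\times\mathbb{R}^n\to\mathbb{R}^n$ is continuous, $\|f(t,x)\|\le\beta\mu'(t)\mu^{-1}(t)$, $\|f(t,x_1)-f(t,x_2)\|\le\gamma\mu'(t)\mu^{-1}(t)\|x_1-x_2\|$ for constants $\beta,\gamma\ge0$, and $6K\gamma\alpha^{-1}<1$. $Y(t,\tau,\xi)$ is the solution of $x'=A(t)x$ with $Y(\tau)=\xi$. For each $(\tau,\xi)$, $g(t,(\tau,\xi))$ denotes the unique solution bounded on $\mathbb{R}$ of $Z'=A(t)Z+f(t,Y(t,\tau,\xi)+Z)$ (it exists and is unique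 under these hypotheses). Define $G(t,y)=y+g(t,(t,y))$. *)

theory Defs
  imports "HOL-Analysis.Analysis"
begin

text \<open>Matrices are elements of real^'n^'n; vectors are real^'n.  Matrix norms are the
operator norms induced by the Euclidean vector norm.\<close>

definition opnorm :: "real^'n^'n \<Rightarrow> real" where
  "opnorm M = onorm (\<lambda>x. M *v x)"

text \<open>Y(t,tau,xi): solution of x' = A(t)x with Y(tau) = xi, written through the
evolution operator T of x' = A(t)x.\<close>

definition Ysol :: "(real \<Rightarrow> real \<Rightarrow> real^'n^'n) \<Rightarrow> real \<Rightarrow> real \<Rightarrow> real^'n \<Rightarrow> real^'n" where
  "Ysol T t \<tau> \<xi> = T t \<tau> *v \<xi>"

definition gsol :: "(real \<Rightarrow> real^'n^'n) \<Rightarrow> (real \<Rightarrow> real^'n \<Rightarrow> real^'n)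
    \<Rightarrow> (real \<Rightarrow> real \<Rightarrow> real^'n^'n) \<Rightarrow> real \<Rightarrow> real^'n \<Rightarrow> (real \<Rightarrow> real^'n)" where
  "gsol A f T \<tau> \<xi> = (THE Z. (\<forall>t. (Z has_vector_derivative
        (A t *v Z t + f t (Ysol T t \<tau> \<xi> + Z t))) (at t)) \<and> bounded (range Z))"

definition Gmap :: "(real \<Rightarrow> real^'n^'n) \<Rightarrow> (real \<Rightarrow> real^'n \<Rightarrow> real^'n)
    \<Rightarrow> (real \<Rightarrow> real \<Rightarrow> real^'n^'n) \<Rightarrow> real \<Rightarrow> real^'n \<Rightarrow> real^'n" where
  "Gmap A f T t y = y + gsol A f T t y t"

end

theory Submission
  imports Defs
begin

(* The bounded solution g(.,(tau,xi)) of Z' = A(t) Z + f(t, Y(t,tau,xi) + Z) is a fixed point of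
   Z |-> green (f(., Y + Z)), where
     green h t = int_{-inf}^t T(t,s) P(s) h(s) ds - int_t^inf T(t,s) Q(s) h(s) ds
   is the Green operator of the dichotomy.  The dichotomy estimates give |green h t| <= 2 c K / alpha
   whenever |h(s)| <= c mu'(s)/mu(s), so for 2 K gamma / alpha < 1 this map is a contraction on bounded
   continuous functions; bounded solutions of x' = A(t) x vanish, so every bounded solution is a fixed
   point.  As Y(s, t, Y(t,t0,y0)) = Y(s,t0,y0), the equation defining g(.,(t, Y(t,t0,y0))) does not
   depend on t, so G(t, Y(t,t0,y0)) = Y(t,t0,y0) + g(t,(t0,y0)) is the sum of a solution of
   x' = A(t) x and a solution of Z' = A(t) Z + f(t, Y + Z), hence solves x' = A(t) x + f(t,x). *)

section \<open>Exponential growth bounds\<close>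

lemma norm_le_exp_mult_norm_forward:
  fixes X :: "real \<Rightarrow> 'a::real_inner"
  assumes X: "\<And>t. (X has_vector_derivative X' t) (at t)"
    and X'_le: "\<And>t. norm (X' t) \<le> M * norm (X t)"
    and "s \<le> t"
  shows "norm (X t) \<le> exp (M * (t - s)) * norm (X s)"
proof -
  define \<psi> where "\<psi> x = exp (- 2 * M * x) * (X x \<bullet> X x)" for x
  have "\<psi> t \<le> \<psi> s"
  proof (rule DERIV_nonpos_imp_nonincreasing[OF \<open>s \<le> t\<close>])
    fix x
    have sq: "((\<lambda>x. X x \<bullet> X x) has_real_derivative 2 * (X x \<bullet> X' x)) (at x)"
      using bounded_bilinear.has_vector_derivative[OF bounded_bilinear_inner X X]
      by (simp add: has_real_derivative_iff_has_vector_derivative inner_commute)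
    have "X x \<bullet> X' x \<le> M * (X x \<bullet> X x)"
      using norm_cauchy_schwarz[of "X x" "X' x"] mult_left_mono[OF X'_le[of x] norm_ge_zero[of "X x"]]
      by (simp add: dot_square_norm power2_eq_square mult_ac)
    then have "exp (- 2 * M * x) * (2 * (X x \<bullet> X' x))
        + (- 2 * M) * exp (- 2 * M * x) * (X x \<bullet> X x) \<le> 0"
      by (simp add: algebra_simps)
    moreover have "(\<psi> has_real_derivative
        exp (- 2 * M * x) * (2 * (X x \<bullet> X' x)) + (- 2 * M) * exp (- 2 * M * x) * (X x \<bullet> X x)) (at x)"
      unfolding \<psi>_def by (auto intro!: derivative_eq_intros sq)
    ultimately show "\<exists>y. (\<psi> has_real_derivative y) (at x) \<and> y \<le> 0" by blast
  qed
  then have "norm (X t)^2 \<le> exp (2 * M * (t - s)) * norm (X s)^2"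
    by (simp add: \<psi>_def dot_square_norm exp_diff exp_minus field_simps)
  also have "\<dots> = (exp (M * (t - s)) * norm (X s))^2"
    by (simp add: power_mult_distrib flip: exp_double)
  finally show ?thesis
    by (rule power2_le_imp_le) simp
qed

lemma norm_le_exp_mult_norm:
  fixes X :: "real \<Rightarrow> 'a::real_inner"
  assumes X: "\<And>t. (X has_vector_derivative X' t) (at t)"
    and X'_le: "\<And>t. norm (X' t) \<le> M * norm (X t)"
  shows "norm (X t) \<le> exp (M * \<bar>t - s\<bar>) * norm (X s)"
proof (cases "s \<le> t")
  case True
  then show ?thesis
    using norm_le_exp_mult_norm_forward[OF X X'_le] by simp
next
  case False
  have "((\<lambda>t. X (- t)) has_vector_derivative - X' (- t)) (at t)" for t
    using vector_diff_chain_at[OF has_vector_derivative_minus[OF has_vector_derivative_id] X]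
    by (simp add: o_def)
  from norm_le_exp_mult_norm_forward[OF this, of M "- s" "- t"] X'_le False
  show ?thesis by simp
qed

section \<open>Evolution operators\<close>

lemma bounded_bilinear_matrix_vector_mult [bounded_bilinear]:
  "bounded_bilinear ((*v) :: real^'n^'m \<Rightarrow> real^'n \<Rightarrow> real^'m)"
  unfolding bilinear_conv_bounded_bilinear[symmetric] bilinear_def
  by (auto intro!: linearI simp: matrix_vector_right_distrib matrix_vector_mult_scaleR
      vec_eq_iff matrix_vector_mult_def sum_distrib_left mult.assoc distrib_right sum.distrib)

lemma opnorm_bound: "norm (M *v x) \<le> opnorm M * norm x"
  unfolding opnorm_def by (rule onorm[OF matrix_vector_mul_bounded_linear])

locale evolution_operator =
  fixes A :: "real \<Rightarrow> real^'n^'n" and T :: "real \<Rightarrow> real \<Rightarrow> real^'n^'n"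
  assumes A_bounded: "bounded (range A)"
    and T_same: "\<And>s. T s s = mat 1"
    and T_has_derivative: "\<And>t s. ((\<lambda>t. T t s) has_vector_derivative (A t ** T t s)) (at t)"
begin

lemma coefficient_bound: obtains M where "\<And>t x. norm (A t *v x) \<le> M * norm x"
proof -
  obtain B where B: "\<And>t. norm (A t) \<le> B"
    using A_bounded by (auto simp: bounded_iff)
  obtain C where C: "\<And>M x. norm ((M :: real^'n^'n) *v x) \<le> norm M * norm x * C" "C > 0"
    using bounded_bilinear.pos_bounded[OF bounded_bilinear_matrix_vector_mult] by blast
  have "norm (A t *v x) \<le> B * C * norm x" for t x
  proof -
    have "norm (A t *v x) \<le> norm (A t) * norm x * C" by (rule C(1))
    also have "\<dots> \<le> B * norm x * C"
      using B[of t] C(2) by (intro mult_right_mono) auto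
    finally show ?thesis by (simp add: mult_ac)
  qed
  then show thesis by (rule that)
qed

lemma evolution_apply_has_vector_derivative:
  "((\<lambda>t. T t s *v v) has_vector_derivative A t *v (T t s *v v)) (at t)"
  using bounded_linear.has_vector_derivative[OF
      bounded_bilinear.bounded_linear_left[OF bounded_bilinear_matrix_vector_mult] T_has_derivative]
  by (simp add: matrix_vector_mul_assoc)

lemma linear_solution_eq_evolution:
  assumes X: "\<And>t. (X has_vector_derivative A t *v X t) (at t)"
  shows "X t = T t s *v X s"
proof -
  obtain M where M: "\<And>t x. norm (A t *v x) \<le> M * norm x" using coefficient_bound by blast
  define D where "D t = X t - T t s *v X s" for t
  have "(D has_vector_derivative A t *v D t) (at t)" for t
    unfolding D_def using has_vector_derivative_diff[OF X evolution_apply_has_vector_derivative]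
    by (simp add: matrix_vector_mult_diff_distrib)
  from norm_le_exp_mult_norm[OF this M, of t s] have "D t = 0"
    by (simp add: D_def T_same)
  then show ?thesis by (simp add: D_def)
qed

lemma evolution_cocycle_apply: "T t s *v (T s r *v v) = T t r *v v"
  using linear_solution_eq_evolution[OF evolution_apply_has_vector_derivative, of t r v s] by simp

lemma evolution_growth_bound:
  obtains M where "\<And>t s v. norm (T t s *v v) \<le> exp (M * \<bar>t - s\<bar>) * norm v"
proof -
  obtain M where M: "\<And>t x. norm (A t *v x) \<le> M * norm x" using coefficient_bound by blast
  show thesis
  proof (rule that)
    fix t s v
    show "norm (T t s *v v) \<le> exp (M * \<bar>t - s\<bar>) * norm v"
      using norm_le_exp_mult_norm[of "\<lambda>t. T t s *v v", OF evolution_apply_has_vector_derivative M, of t s]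
      by (simp add: T_same)
  qed
qed

(* T t s (h s) - T t s0 (h s0) = T t s (h s - T s s0 (h s0)) by the cocycle property, and T t s stays
   bounded for s near s0 by the growth bound. *)
lemma evolution_apply_tendsto_second:
  assumes h: "(h \<longlongrightarrow> h s\<^sub>0) (at s\<^sub>0 within S)"
  shows "((\<lambda>s. T t s *v h s) \<longlongrightarrow> T t s\<^sub>0 *v h s\<^sub>0) (at s\<^sub>0 within S)"
proof -
  obtain M where M: "\<And>t s v. norm (T t s *v v) \<le> exp (M * \<bar>t - s\<bar>) * norm v"
    using evolution_growth_bound by blast
  have "((\<lambda>s. T s s\<^sub>0) \<longlongrightarrow> T s\<^sub>0 s\<^sub>0) (at s\<^sub>0 within S)"
    using has_vector_derivative_continuous[OF T_has_derivative]
    by (simp add: continuous_at tendsto_within_subset[where S = UNIV])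
  then have "((\<lambda>s. h s - T s s\<^sub>0 *v h s\<^sub>0) \<longlongrightarrow> h s\<^sub>0 - T s\<^sub>0 s\<^sub>0 *v h s\<^sub>0) (at s\<^sub>0 within S)"
    by (intro tendsto_intros h)
  then have "((\<lambda>s. norm (h s - T s s\<^sub>0 *v h s\<^sub>0)) \<longlongrightarrow> 0) (at s\<^sub>0 within S)"
    by (intro tendsto_norm_zero) (simp add: T_same)
  then have "((\<lambda>s. exp (M * \<bar>t - s\<bar>) * norm (h s - T s s\<^sub>0 *v h s\<^sub>0)) \<longlongrightarrow>
      exp (M * \<bar>t - s\<^sub>0\<bar>) * 0) (at s\<^sub>0 within S)"
    by (rule tendsto_mult[rotated]) (intro tendsto_intros)
  then have lim: "((\<lambda>s. exp (M * \<bar>t - s\<bar>) * norm (h s - T s s\<^sub>0 *v h s\<^sub>0)) \<longlongrightarrow> 0)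
      (at s\<^sub>0 within S)"
    by simp
  have "norm (T t s *v h s - T t s\<^sub>0 *v h s\<^sub>0) \<le> exp (M * \<bar>t - s\<bar>) * norm (h s - T s s\<^sub>0 *v h s\<^sub>0)"
    for s
    using M[of t s "h s - T s s\<^sub>0 *v h s\<^sub>0"]
    by (simp add: matrix_vector_mult_diff_distrib evolution_cocycle_apply)
  from Lim_null_comparison[OF always_eventually[OF allI[OF this]] lim]
  show ?thesis by (rule LIM_zero_cancel)
qed

lemma continuous_on_evolution_apply_second:
  "continuous_on S h \<Longrightarrow> continuous_on S (\<lambda>s. T t s *v h s)"
  by (simp add: continuous_on_def evolution_apply_tendsto_second)

lemma Ysol_has_vector_derivative:
  "((\<lambda>t. Ysol T t \<tau> \<xi>) has_vector_derivative A t *v Ysol T t \<tau> \<xi>) (at t)"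
  unfolding Ysol_def by (rule evolution_apply_has_vector_derivative)

lemma gsol_along_solution: "gsol A f T t (Ysol T t \<tau> \<xi>) = gsol A f T \<tau> \<xi>"
  by (simp add: gsol_def Ysol_def evolution_cocycle_apply)

end

section \<open>Integrals over half-lines\<close>

lemma has_integral_FTC_atLeast:
  fixes g G :: "real \<Rightarrow> real"
  assumes g_nonneg: "\<And>s. a \<le> s \<Longrightarrow> 0 \<le> g s"
    and G: "\<And>s. a \<le> s \<Longrightarrow> (G has_real_derivative g s) (at s)"
    and lim: "(G \<longlongrightarrow> L) at_top"
  shows "(g has_integral L - G a) {a..}"
proof (rule has_integral_to_inf)
  have FTC: "(g has_integral G y - G a) {a..y}" if "a \<le> y" for y
    using that by (intro fundamental_theorem_of_calculus)
      (auto simp flip: has_real_derivative_iff_has_vector_derivative intro!: DERIV_subset[OF G])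
  show "g integrable_on {a..y}" for y
    using FTC[of y] by (cases "a \<le> y") (auto simp: integrable_on_def)
  have "\<forall>\<^sub>F y in at_top. G y - G a = integral {a..y} g"
    using eventually_ge_at_top[of a] by (rule eventually_mono) (metis FTC integral_unique)
  with tendsto_diff[OF lim tendsto_const[of "G a"]]
  show "((\<lambda>y. integral {a..y} g) \<longlongrightarrow> L - G a) at_top"
    by (rule Lim_transform_eventually)
qed (rule g_nonneg)

lemma has_integral_FTC_atMost:
  fixes g G :: "real \<Rightarrow> real"
  assumes g_nonneg: "\<And>s. s \<le> a \<Longrightarrow> 0 \<le> g s"
    and G: "\<And>s. s \<le> a \<Longrightarrow> (G has_real_derivative g s) (at s)"
    and lim: "(G \<longlongrightarrow> L) at_bot"
  shows "(g has_integral G a - L) {..a}"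
proof -
  have "((\<lambda>s. g (- s)) has_integral - L - (- G (- (- a)))) {- a..}"
  proof (rule has_integral_FTC_atLeast)
    show "0 \<le> g (- s)" if "- a \<le> s" for s
      using that g_nonneg by simp
    show "((\<lambda>s. - G (- s)) has_real_derivative g (- s)) (at s)" if "- a \<le> s" for s
      using DERIV_minus[OF G[of "- s", unfolded DERIV_mirror]] that by simp
    show "((\<lambda>s. - G (- s)) \<longlongrightarrow> - L) at_top"
      using lim by (intro tendsto_minus) (simp add: filterlim_at_bot_mirror)
  qed
  then have "(\<lambda>s. g (- s)) absolutely_integrable_on {- a..}
      \<and> integral {- a..} (\<lambda>s. g (- s)) = G a - L"
    using g_nonneg by (auto intro!: nonnegative_absolutely_integrable_1)
  then have "g absolutely_integrable_on {..a} \<and> integral {..a} g = G a - L"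
    by (subst (asm) has_absolute_integral_reflect_real) auto
  then show ?thesis
    using absolutely_integrable_on_def has_integral_integral by metis
qed

lemma continuous_dominated_integral_bound:
  fixes f :: "'a::euclidean_space \<Rightarrow> 'b::euclidean_space"
  assumes f: "continuous_on S f" and S: "S \<in> sets lebesgue"
    and g: "(g has_integral I) S" and f_le: "\<And>s. s \<in> S \<Longrightarrow> norm (f s) \<le> g s"
  shows "f integrable_on S" and "norm (integral S f) \<le> I"
proof -
  show int: "f integrable_on S"
    using continuous_imp_measurable_on_sets_lebesgue[OF f S] g f_le S
    by (blast intro: measurable_bounded_by_integrable_imp_integrable)
  show "norm (integral S f) \<le> I"
    using integral_norm_bound_integral[OF int _ f_le] g by (auto simp: has_integral_iff)
qed

lemma integral_matrix_vector_mult: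
  fixes f :: "'a::euclidean_space \<Rightarrow> real^'n"
  assumes "f integrable_on S"
  shows "integral S (\<lambda>x. M *v f x) = M *v integral S f"
  using integral_linear[OF assms matrix_vector_mul_bounded_linear] by (simp add: o_def)

lemma integral_has_vector_derivative_at:
  fixes f :: "real \<Rightarrow> 'a::banach"
  assumes f: "continuous_on UNIV f" and "a < x"
  shows "((\<lambda>t. integral {a..t} f) has_vector_derivative f x) (at x)"
proof -
  have "((\<lambda>t. integral {a..t} f) has_vector_derivative f x) (at x within {a..x + 1})"
    using \<open>a < x\<close> by (intro integral_has_vector_derivative continuous_on_subset[OF f]) auto
  moreover have "at x within {a..x + 1} = at x"
    using \<open>a < x\<close> by (intro at_within_Icc_at) auto
  ultimately show ?thesis by simp
qed

lemma integral_atMost_has_vector_derivative: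
  fixes f :: "real \<Rightarrow> 'a::banach"
  assumes f: "continuous_on UNIV f" and int: "\<And>t. f integrable_on {..t}"
  shows "((\<lambda>t. integral {..t} f) has_vector_derivative f x) (at x)"
proof -
  define a where "a = x - 1"
  have deriv: "((\<lambda>t. integral {..a} f + integral {a..t} f) has_vector_derivative f x) (at x)"
    using has_vector_derivative_add[OF has_vector_derivative_const integral_has_vector_derivative_at[OF f]]
    by (simp add: a_def)
  have "integral {..a} f + integral {a..t} f = integral {..t} f" if "t \<in> {a<..}" for t
  proof -
    have "integral ({..a} \<union> {a..t}) f = integral {..a} f + integral {a..t} f"
      using that by (intro integral_Un int integrable_continuous_interval continuous_on_subset[OF f])
        (auto intro: negligible_subset[OF negligible_sing[of a]])
    moreover have "{..a} \<union> {a..t} = {..t}" using that by auto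
    ultimately show ?thesis by simp
  qed
  with has_vector_derivative_transform_within_open[OF deriv, of "{a<..}"] show ?thesis
    by (auto simp: a_def)
qed

lemma integral_atLeast_has_vector_derivative:
  fixes f :: "real \<Rightarrow> 'a::banach"
  assumes f: "continuous_on UNIV f" and int: "\<And>t. f integrable_on {t..}"
  shows "((\<lambda>t. integral {t..} f) has_vector_derivative - f x) (at x)"
proof -
  define a where "a = x - 1"
  have deriv: "((\<lambda>t. integral {a..} f - integral {a..t} f) has_vector_derivative - f x) (at x)"
    using has_vector_derivative_diff[OF has_vector_derivative_const integral_has_vector_derivative_at[OF f]]
    by (simp add: a_def)
  have "integral {a..} f - integral {a..t} f = integral {t..} f" if "t \<in> {a<..}" for t
  proof -
    have "integral ({a..t} \<union> {t..}) f = integral {a..t} f + integral {t..} f"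
      using that by (intro integral_Un int integrable_continuous_interval continuous_on_subset[OF f])
        (auto intro: negligible_subset[OF negligible_sing[of t]])
    moreover have "{a..t} \<union> {t..} = {a..}" using that by auto
    ultimately show ?thesis by simp
  qed
  with has_vector_derivative_transform_within_open[OF deriv, of "{a<..}"] show ?thesis
    by (auto simp: a_def)
qed

section \<open>Algebraic dichotomies and the Green operator\<close>

lemma mono_has_real_derivative_nonneg:
  fixes f :: "real \<Rightarrow> real"
  assumes "mono f" and f: "(f has_real_derivative D) (at x)"
  shows "0 \<le> D"
proof -
  have "((\<lambda>h. (f (x + h) - f x) / h) \<longlongrightarrow> D) (at_right 0)"
    using f by (simp add: DERIV_def tendsto_mono[OF at_within_le_at])
  moreover have "\<forall>\<^sub>F h in at_right 0. 0 \<le> (f (x + h) - f x) / h"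
    using eventually_at_right_less[of "0::real"]
    by (rule eventually_mono) (use \<open>mono f\<close> in \<open>auto simp: mono_def\<close>)
  ultimately show ?thesis by (rule tendsto_lowerbound) simp
qed

lemma powr_divide_neg: "0 < x \<Longrightarrow> 0 < y \<Longrightarrow> (x / y) powr (- a) = x powr (- a) * y powr a"
  for x y a :: real
  by (subst powr_divide) (simp_all add: powr_minus divide_inverse)

locale algebraic_dichotomy = evolution_operator A T
  for A :: "real \<Rightarrow> real^'n^'n" and T +
  fixes \<mu> :: "real \<Rightarrow> real" and P :: "real \<Rightarrow> real^'n^'n" and K \<alpha> :: real
  assumes mu_pos: "\<And>t. \<mu> t > 0"
    and mu_mono: "mono \<mu>"
    and mu_differentiable: "\<And>t. \<mu> differentiable (at t)"
    and mu_at_bot: "(\<mu> \<longlongrightarrow> 0) at_bot"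
    and mu_at_top: "filterlim \<mu> at_top at_top"
    and K_pos: "K > 0" and alpha_pos: "\<alpha> > 0"
    and P_commute: "\<And>t s. T t s ** P s = P t ** T t s"
    and stable_bound: "\<And>t s. t \<ge> s \<Longrightarrow> opnorm (T t s ** P s) \<le> K * (\<mu> t / \<mu> s) powr (-\<alpha>)"
    and unstable_bound:
      "\<And>t s. t \<le> s \<Longrightarrow> opnorm (T t s ** (mat 1 - P s)) \<le> K * (\<mu> s / \<mu> t) powr (-\<alpha>)"
begin

definition log_deriv :: "real \<Rightarrow> real" where
  "log_deriv s = deriv \<mu> s * inverse (\<mu> s)"

lemma mu_has_real_derivative: "(\<mu> has_real_derivative deriv \<mu> s) (at s)"
  using mu_differentiable DERIV_deriv_iff_real_differentiable by blast

lemma log_deriv_nonneg: "0 \<le> log_deriv s"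
  using mono_has_real_derivative_nonneg[OF mu_mono mu_has_real_derivative] mu_pos[of s]
  by (simp add: log_deriv_def)

lemma mu_powr_has_real_derivative:
  "((\<lambda>s. \<mu> s powr a) has_real_derivative a * \<mu> s powr a * log_deriv s) (at s)"
  using DERIV_powr[OF mu_has_real_derivative mu_pos DERIV_const]
  by (simp add: log_deriv_def divide_inverse mult_ac)

lemma mu_powr_tendsto_at_bot: "a > 0 \<Longrightarrow> ((\<lambda>s. \<mu> s powr a) \<longlongrightarrow> 0) at_bot"
  by (intro tendsto_zero_powrI[OF mu_at_bot tendsto_const])
    (auto intro: always_eventually less_imp_le mu_pos)

lemma mu_powr_tendsto_at_top: "a < 0 \<Longrightarrow> ((\<lambda>s. \<mu> s powr a) \<longlongrightarrow> 0) at_top"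
  by (rule tendsto_neg_powr[OF _ mu_at_top])

lemma stable_kernel_has_integral:
  "((\<lambda>s. K * (\<mu> t / \<mu> s) powr (-\<alpha>) * log_deriv s) has_integral K / \<alpha>) {..t}"
proof -
  define G where "G s = K / \<alpha> * \<mu> t powr (-\<alpha>) * \<mu> s powr \<alpha>" for s
  have "((\<lambda>s. K * (\<mu> t / \<mu> s) powr (-\<alpha>) * log_deriv s) has_integral G t - 0) {..t}"
  proof (rule has_integral_FTC_atMost)
    show "0 \<le> K * (\<mu> t / \<mu> s) powr (-\<alpha>) * log_deriv s" for s
      using K_pos log_deriv_nonneg by simp
    show "(G has_real_derivative K * (\<mu> t / \<mu> s) powr (-\<alpha>) * log_deriv s) (at s)" for s
    proof -
      have "(G has_real_derivative K / \<alpha> * \<mu> t powr (-\<alpha>) * (\<alpha> * \<mu> s powr \<alpha> * log_deriv s)) (at s)"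
        unfolding G_def by (intro DERIV_cmult mu_powr_has_real_derivative)
      then show ?thesis
        using alpha_pos by (simp add: powr_divide_neg mu_pos mult_ac)
    qed
    show "(G \<longlongrightarrow> 0) at_bot"
      unfolding G_def by (intro tendsto_mult_right_zero mu_powr_tendsto_at_bot alpha_pos)
  qed
  moreover have "G t = K / \<alpha>"
    using mu_pos[of t] by (simp add: G_def mult.assoc flip: powr_add)
  ultimately show ?thesis by simp
qed

lemma unstable_kernel_has_integral:
  "((\<lambda>s. K * (\<mu> s / \<mu> t) powr (-\<alpha>) * log_deriv s) has_integral K / \<alpha>) {t..}"
proof -
  define G where "G s = - K / \<alpha> * \<mu> t powr \<alpha> * \<mu> s powr (-\<alpha>)" for s
  have "((\<lambda>s. K * (\<mu> s / \<mu> t) powr (-\<alpha>) * log_deriv s) has_integral 0 - G t) {t..}"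
  proof (rule has_integral_FTC_atLeast)
    show "0 \<le> K * (\<mu> s / \<mu> t) powr (-\<alpha>) * log_deriv s" for s
      using K_pos log_deriv_nonneg by simp
    show "(G has_real_derivative K * (\<mu> s / \<mu> t) powr (-\<alpha>) * log_deriv s) (at s)" for s
    proof -
      have "(G has_real_derivative - K / \<alpha> * \<mu> t powr \<alpha> * (- \<alpha> * \<mu> s powr (-\<alpha>) * log_deriv s)) (at s)"
        unfolding G_def by (intro DERIV_cmult mu_powr_has_real_derivative)
      then show ?thesis
        using alpha_pos by (simp add: powr_divide_neg mu_pos mult_ac)
    qed
    show "(G \<longlongrightarrow> 0) at_top"
      unfolding G_def using alpha_pos by (intro tendsto_mult_right_zero mu_powr_tendsto_at_top) simp
  qed
  moreover have "G t = - K / \<alpha>"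
    using mu_pos[of t] by (simp add: G_def mult.assoc flip: powr_add)
  ultimately show ?thesis by simp
qed

lemma P_commute_apply: "T t s *v (P s *v x) = P t *v (T t s *v x)"
  by (simp add: P_commute matrix_vector_mul_assoc)

lemma Q_commute_apply: "T t s *v ((mat 1 - P s) *v x) = (mat 1 - P t) *v (T t s *v x)"
  by (simp add: matrix_vector_mult_diff_rdistrib matrix_vector_mult_diff_distrib P_commute_apply)

(* The Green operator, with T(t,s) = T(t,0) T(0,s) so that the integrands do not depend on t. *)
definition stable_integrand :: "(real \<Rightarrow> real^'n) \<Rightarrow> real \<Rightarrow> real^'n" where
  "stable_integrand h s = P 0 *v (T 0 s *v h s)"

definition unstable_integrand :: "(real \<Rightarrow> real^'n) \<Rightarrow> real \<Rightarrow> real^'n" where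
  "unstable_integrand h s = (mat 1 - P 0) *v (T 0 s *v h s)"

definition green :: "(real \<Rightarrow> real^'n) \<Rightarrow> real \<Rightarrow> real^'n" where
  "green h t = T t 0 *v (integral {..t} (stable_integrand h) - integral {t..} (unstable_integrand h))"

definition rate_dominated :: "real \<Rightarrow> (real \<Rightarrow> real^'n) \<Rightarrow> bool" where
  "rate_dominated c h \<longleftrightarrow> continuous_on UNIV h \<and> (\<forall>s. norm (h s) \<le> c * log_deriv s)"

lemma continuous_on_integrands:
  assumes "continuous_on UNIV h"
  shows "continuous_on UNIV (stable_integrand h)" and "continuous_on UNIV (unstable_integrand h)"
  unfolding stable_integrand_def[abs_def] unstable_integrand_def[abs_def]
  using continuous_on_evolution_apply_second[OF assms, of 0]
  by (auto intro: bounded_linear.continuous_on[OF matrix_vector_mul_bounded_linear])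

lemma evolution_stable_integrand: "T t 0 *v stable_integrand h s = (T t s ** P s) *v h s"
  by (simp add: stable_integrand_def evolution_cocycle_apply flip: P_commute_apply matrix_vector_mul_assoc)

lemma evolution_unstable_integrand: "T t 0 *v unstable_integrand h s = (T t s ** (mat 1 - P s)) *v h s"
  by (simp add: unstable_integrand_def evolution_cocycle_apply flip: Q_commute_apply matrix_vector_mul_assoc)

lemma stable_integral_bound:
  assumes h: "rate_dominated c h"
  shows "(\<lambda>s. T t 0 *v stable_integrand h s) integrable_on {..t}"
    and "norm (integral {..t} (\<lambda>s. T t 0 *v stable_integrand h s)) \<le> c * K / \<alpha>"
proof -
  have cont: "continuous_on {..t} (\<lambda>s. T t 0 *v stable_integrand h s)"
    using h continuous_on_integrands(1) unfolding rate_dominated_def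
    by (blast intro: continuous_on_subset bounded_linear.continuous_on[OF matrix_vector_mul_bounded_linear])
  have le: "norm (T t 0 *v stable_integrand h s) \<le> c * (K * (\<mu> t / \<mu> s) powr (-\<alpha>) * log_deriv s)"
    if "s \<in> {..t}" for s
  proof -
    have "norm (T t 0 *v stable_integrand h s) \<le> opnorm (T t s ** P s) * norm (h s)"
      unfolding evolution_stable_integrand by (rule opnorm_bound)
    also have "\<dots> \<le> K * (\<mu> t / \<mu> s) powr (-\<alpha>) * (c * log_deriv s)"
      using that h stable_bound[of s t] K_pos by (intro mult_mono) (auto simp: rate_dominated_def)
    finally show ?thesis by (simp add: mult_ac)
  qed
  note bound = continuous_dominated_integral_bound[OF cont _
      has_integral_mult_right[OF stable_kernel_has_integral, of c] le]
  show "(\<lambda>s. T t 0 *v stable_integrand h s) integrable_on {..t}"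
    using bound(1) by simp
  show "norm (integral {..t} (\<lambda>s. T t 0 *v stable_integrand h s)) \<le> c * K / \<alpha>"
    using bound(2) by simp
qed

lemma unstable_integral_bound:
  assumes h: "rate_dominated c h"
  shows "(\<lambda>s. T t 0 *v unstable_integrand h s) integrable_on {t..}"
    and "norm (integral {t..} (\<lambda>s. T t 0 *v unstable_integrand h s)) \<le> c * K / \<alpha>"
proof -
  have cont: "continuous_on {t..} (\<lambda>s. T t 0 *v unstable_integrand h s)"
    using h continuous_on_integrands(2) unfolding rate_dominated_def
    by (blast intro: continuous_on_subset bounded_linear.continuous_on[OF matrix_vector_mul_bounded_linear])
  have le: "norm (T t 0 *v unstable_integrand h s) \<le> c * (K * (\<mu> s / \<mu> t) powr (-\<alpha>) * log_deriv s)"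
    if "s \<in> {t..}" for s
  proof -
    have "norm (T t 0 *v unstable_integrand h s) \<le> opnorm (T t s ** (mat 1 - P s)) * norm (h s)"
      unfolding evolution_unstable_integrand by (rule opnorm_bound)
    also have "\<dots> \<le> K * (\<mu> s / \<mu> t) powr (-\<alpha>) * (c * log_deriv s)"
      using that h unstable_bound[of t s] K_pos by (intro mult_mono) (auto simp: rate_dominated_def)
    finally show ?thesis by (simp add: mult_ac)
  qed
  note bound = continuous_dominated_integral_bound[OF cont _
      has_integral_mult_right[OF unstable_kernel_has_integral, of c] le]
  show "(\<lambda>s. T t 0 *v unstable_integrand h s) integrable_on {t..}"
    using bound(1) by simp
  show "norm (integral {t..} (\<lambda>s. T t 0 *v unstable_integrand h s)) \<le> c * K / \<alpha>"
    using bound(2) by simp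
qed

lemma stable_integrand_integrable:
  assumes "rate_dominated c h" shows "stable_integrand h integrable_on {..t}"
  using integrable_linear[OF stable_integral_bound(1)[OF assms, of t]
      matrix_vector_mul_bounded_linear[of "T 0 t"]]
  by (simp add: o_def evolution_cocycle_apply T_same)

lemma unstable_integrand_integrable:
  assumes "rate_dominated c h" shows "unstable_integrand h integrable_on {t..}"
  using integrable_linear[OF unstable_integral_bound(1)[OF assms, of t]
      matrix_vector_mul_bounded_linear[of "T 0 t"]]
  by (simp add: o_def evolution_cocycle_apply T_same)

lemma green_bound:
  assumes h: "rate_dominated c h" shows "norm (green h t) \<le> 2 * c * K / \<alpha>"
proof -
  have "green h t = integral {..t} (\<lambda>s. T t 0 *v stable_integrand h s)
      - integral {t..} (\<lambda>s. T t 0 *v unstable_integrand h s)"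
    unfolding green_def matrix_vector_mult_diff_distrib
    by (simp add: integral_matrix_vector_mult stable_integrand_integrable[OF h]
        unstable_integrand_integrable[OF h])
  then have "norm (green h t) \<le> norm (integral {..t} (\<lambda>s. T t 0 *v stable_integrand h s))
      + norm (integral {t..} (\<lambda>s. T t 0 *v unstable_integrand h s))"
    by (simp add: norm_triangle_ineq4)
  also have "\<dots> \<le> c * K / \<alpha> + c * K / \<alpha>"
    by (intro add_mono stable_integral_bound(2)[OF h] unstable_integral_bound(2)[OF h])
  finally show ?thesis by (simp add: mult_ac)
qed

lemma green_has_vector_derivative:
  assumes h: "rate_dominated c h"
  shows "(green h has_vector_derivative A t *v green h t + h t) (at t)"
proof -
  note cont = continuous_on_integrands[OF h[unfolded rate_dominated_def, THEN conjunct1]]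
  define D where "D t = integral {..t} (stable_integrand h) - integral {t..} (unstable_integrand h)" for t
  have "(D has_vector_derivative stable_integrand h t - - unstable_integrand h t) (at t)"
    unfolding D_def
    by (intro has_vector_derivative_diff integral_atMost_has_vector_derivative
        integral_atLeast_has_vector_derivative cont stable_integrand_integrable[OF h]
        unstable_integrand_integrable[OF h])
  moreover have "stable_integrand h t - - unstable_integrand h t = T 0 t *v h t"
    by (simp add: stable_integrand_def unstable_integrand_def matrix_vector_mult_diff_rdistrib)
  ultimately have "((\<lambda>t. T t 0 *v D t) has_vector_derivative
      T t 0 *v (T 0 t *v h t) + (A t ** T t 0) *v D t) (at t)"
    using bounded_bilinear.has_vector_derivative[OF bounded_bilinear_matrix_vector_mult T_has_derivative]
    by simp
  then show ?thesis
    by (simp add: green_def[abs_def] D_def[symmetric] evolution_cocycle_apply T_same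
        add.commute flip: matrix_vector_mul_assoc)
qed

lemma continuous_on_green: "rate_dominated c h \<Longrightarrow> continuous_on UNIV (green h)"
  by (meson continuous_at_imp_continuous_on green_has_vector_derivative has_vector_derivative_continuous)

lemma green_diff:
  assumes "rate_dominated c\<^sub>1 h\<^sub>1" and "rate_dominated c\<^sub>2 h\<^sub>2"
  shows "green (\<lambda>s. h\<^sub>1 s - h\<^sub>2 s) t = green h\<^sub>1 t - green h\<^sub>2 t"
proof -
  have "stable_integrand (\<lambda>s. h\<^sub>1 s - h\<^sub>2 s) = (\<lambda>s. stable_integrand h\<^sub>1 s - stable_integrand h\<^sub>2 s)"
    "unstable_integrand (\<lambda>s. h\<^sub>1 s - h\<^sub>2 s) = (\<lambda>s. unstable_integrand h\<^sub>1 s - unstable_integrand h\<^sub>2 s)"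
    by (simp_all add: stable_integrand_def unstable_integrand_def matrix_vector_mult_diff_distrib fun_eq_iff)
  then show ?thesis
    using assms
    by (simp add: green_def integral_diff stable_integrand_integrable unstable_integrand_integrable
        algebra_simps)
qed

lemma bounded_linear_solution_stable_part_eq_0:
  assumes W: "\<And>t. (W has_vector_derivative A t *v W t) (at t)" and B: "\<And>s. norm (W s) \<le> B"
  shows "P t *v W t = 0"
proof -
  have "norm (P t *v W t) \<le> 0"
  proof (rule tendsto_lowerbound)
    show "((\<lambda>s. K * \<mu> t powr (-\<alpha>) * \<mu> s powr \<alpha> * B) \<longlongrightarrow> 0) at_bot"
      by (intro tendsto_mult_left_zero tendsto_mult_right_zero mu_powr_tendsto_at_bot alpha_pos)
    show "\<forall>\<^sub>F s in at_bot. norm (P t *v W t) \<le> K * \<mu> t powr (-\<alpha>) * \<mu> s powr \<alpha> * B"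
      using eventually_le_at_bot[of t]
    proof (rule eventually_mono)
      fix s assume "s \<le> t"
      have "P t *v W t = (T t s ** P s) *v W s"
        by (subst linear_solution_eq_evolution[OF W, of t s])
          (simp add: P_commute_apply flip: matrix_vector_mul_assoc)
      then have "norm (P t *v W t) \<le> opnorm (T t s ** P s) * norm (W s)"
        by (simp add: opnorm_bound)
      also have "\<dots> \<le> K * (\<mu> t / \<mu> s) powr (-\<alpha>) * B"
        using stable_bound[OF \<open>s \<le> t\<close>] B[of s] K_pos by (intro mult_mono) auto
      finally show "norm (P t *v W t) \<le> K * \<mu> t powr (-\<alpha>) * \<mu> s powr \<alpha> * B"
        by (simp add: powr_divide_neg mu_pos)
    qed
  qed simp
  then show ?thesis by simp
qed

lemma bounded_linear_solution_unstable_part_eq_0: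
  assumes W: "\<And>t. (W has_vector_derivative A t *v W t) (at t)" and B: "\<And>s. norm (W s) \<le> B"
  shows "(mat 1 - P t) *v W t = 0"
proof -
  have "norm ((mat 1 - P t) *v W t) \<le> 0"
  proof (rule tendsto_lowerbound)
    show "((\<lambda>s. K * \<mu> t powr \<alpha> * \<mu> s powr (-\<alpha>) * B) \<longlongrightarrow> 0) at_top"
      using alpha_pos by (intro tendsto_mult_left_zero tendsto_mult_right_zero mu_powr_tendsto_at_top) simp
    show "\<forall>\<^sub>F s in at_top. norm ((mat 1 - P t) *v W t) \<le> K * \<mu> t powr \<alpha> * \<mu> s powr (-\<alpha>) * B"
      using eventually_ge_at_top[of t]
    proof (rule eventually_mono)
      fix s assume "t \<le> s"
      have "(mat 1 - P t) *v W t = (T t s ** (mat 1 - P s)) *v W s"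
        by (subst linear_solution_eq_evolution[OF W, of t s])
          (simp add: Q_commute_apply flip: matrix_vector_mul_assoc)
      then have "norm ((mat 1 - P t) *v W t) \<le> opnorm (T t s ** (mat 1 - P s)) * norm (W s)"
        by (simp add: opnorm_bound)
      also have "\<dots> \<le> K * (\<mu> s / \<mu> t) powr (-\<alpha>) * B"
        using unstable_bound[OF \<open>t \<le> s\<close>] B[of s] K_pos by (intro mult_mono) auto
      finally show "norm ((mat 1 - P t) *v W t) \<le> K * \<mu> t powr \<alpha> * \<mu> s powr (-\<alpha>) * B"
        by (simp add: powr_divide_neg mu_pos mult_ac)
    qed
  qed simp
  then show ?thesis by simp
qed

lemma bounded_linear_solution_eq_0:
  assumes W: "\<And>t. (W has_vector_derivative A t *v W t) (at t)" and "bounded (range W)"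
  shows "W t = 0"
proof -
  obtain B where B: "\<And>s. norm (W s) \<le> B"
    using \<open>bounded (range W)\<close> by (auto simp: bounded_iff)
  have "P t *v W t + (mat 1 - P t) *v W t = 0"
    using bounded_linear_solution_stable_part_eq_0[OF W B]
      bounded_linear_solution_unstable_part_eq_0[OF W B] by simp
  then show ?thesis by (simp add: matrix_vector_mult_diff_rdistrib)
qed

end

section \<open>The perturbed equation\<close>

locale lipschitz_perturbation = algebraic_dichotomy A T \<mu> P K \<alpha>
  for A :: "real \<Rightarrow> real^'n^'n" and T \<mu> P K \<alpha> +
  fixes f :: "real \<Rightarrow> real^'n \<Rightarrow> real^'n" and \<beta> \<gamma> :: real
  assumes f_continuous: "continuous_on UNIV (\<lambda>(t, x). f t x)"
    and f_bound: "\<And>t x. norm (f t x) \<le> \<beta> * deriv \<mu> t * inverse (\<mu> t)"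
    and f_lipschitz:
      "\<And>t x\<^sub>1 x\<^sub>2. norm (f t x\<^sub>1 - f t x\<^sub>2) \<le> \<gamma> * deriv \<mu> t * inverse (\<mu> t) * norm (x\<^sub>1 - x\<^sub>2)"
    and gamma_nonneg: "\<gamma> \<ge> 0"
    and contraction: "2 * K * \<gamma> / \<alpha> < 1"
begin

lemma continuous_on_perturbation:
  "continuous_on UNIV Z \<Longrightarrow> continuous_on UNIV (\<lambda>s. f s (Z s))"
  using continuous_on_compose[OF _ continuous_on_subset[OF f_continuous subset_UNIV],
      of UNIV "\<lambda>s. (s, Z s)"]
  by (simp add: o_def continuous_on_Pair continuous_on_id)

lemma rate_dominated_perturbation:
  "continuous_on UNIV Z \<Longrightarrow> rate_dominated \<beta> (\<lambda>s. f s (Z s))"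
  using f_bound by (simp add: rate_dominated_def continuous_on_perturbation log_deriv_def mult.assoc)

lemma green_perturbation_lipschitz:
  assumes Z: "continuous_on UNIV Z\<^sub>1" "continuous_on UNIV Z\<^sub>2" and d: "\<And>s. norm (Z\<^sub>1 s - Z\<^sub>2 s) \<le> d"
  shows "norm (green (\<lambda>s. f s (Z\<^sub>1 s)) t - green (\<lambda>s. f s (Z\<^sub>2 s)) t) \<le> 2 * K * \<gamma> / \<alpha> * d"
proof -
  have "rate_dominated (\<gamma> * d) (\<lambda>s. f s (Z\<^sub>1 s) - f s (Z\<^sub>2 s))"
    unfolding rate_dominated_def
  proof (intro conjI allI)
    show "continuous_on UNIV (\<lambda>s. f s (Z\<^sub>1 s) - f s (Z\<^sub>2 s))"
      by (intro continuous_intros continuous_on_perturbation Z)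
    fix s
    have "norm (f s (Z\<^sub>1 s) - f s (Z\<^sub>2 s)) \<le> \<gamma> * log_deriv s * norm (Z\<^sub>1 s - Z\<^sub>2 s)"
      using f_lipschitz by (simp add: log_deriv_def mult.assoc)
    also have "\<dots> \<le> \<gamma> * log_deriv s * d"
      using gamma_nonneg log_deriv_nonneg d by (intro mult_left_mono) auto
    finally show "norm (f s (Z\<^sub>1 s) - f s (Z\<^sub>2 s)) \<le> \<gamma> * d * log_deriv s"
      by (simp add: mult_ac)
  qed
  from green_bound[OF this, of t] show ?thesis
    by (simp add: green_diff[OF rate_dominated_perturbation[OF Z(1)] rate_dominated_perturbation[OF Z(2)]]
        mult_ac)
qed

definition perturbed_green ::
    "(real \<Rightarrow> real^'n) \<Rightarrow> (real, real^'n) bcontfun \<Rightarrow> (real, real^'n) bcontfun" where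
  "perturbed_green y X = Bcontfun (green (\<lambda>s. f s (y s + X s)))"

lemma apply_perturbed_green:
  assumes y: "continuous_on UNIV y"
  shows "apply_bcontfun (perturbed_green y X) = green (\<lambda>s. f s (y s + X s))"
proof -
  have h: "rate_dominated \<beta> (\<lambda>s. f s (y s + X s))"
    by (intro rate_dominated_perturbation continuous_intros y continuous_on_apply_bcontfun)
  have "continuous_on UNIV (green (\<lambda>s. f s (y s + X s)))"
    by (rule continuous_on_green[OF h])
  moreover have "bounded (range (green (\<lambda>s. f s (y s + X s))))"
    using green_bound[OF h] by (auto simp: bounded_iff)
  ultimately show ?thesis
    by (simp add: perturbed_green_def Bcontfun_inverse bcontfun_def)
qed

lemma perturbed_green_contraction:
  assumes y: "continuous_on UNIV y"
  shows "dist (perturbed_green y X\<^sub>1) (perturbed_green y X\<^sub>2) \<le> 2 * K * \<gamma> / \<alpha> * dist X\<^sub>1 X\<^sub>2"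
proof (rule dist_bound)
  fix t
  have "norm (green (\<lambda>s. f s (y s + X\<^sub>1 s)) t - green (\<lambda>s. f s (y s + X\<^sub>2 s)) t)
      \<le> 2 * K * \<gamma> / \<alpha> * dist X\<^sub>1 X\<^sub>2"
    using dist_bounded[of X\<^sub>1 _ X\<^sub>2]
    by (intro green_perturbation_lipschitz continuous_intros y continuous_on_apply_bcontfun)
      (simp add: dist_norm)
  then show "dist (perturbed_green y X\<^sub>1 t) (perturbed_green y X\<^sub>2 t) \<le> 2 * K * \<gamma> / \<alpha> * dist X\<^sub>1 X\<^sub>2"
    by (simp add: apply_perturbed_green[OF y] dist_norm)
qed

lemma bounded_solution_eq_green:
  assumes y: "continuous_on UNIV y"
    and Z: "\<And>t. (Z has_vector_derivative A t *v Z t + f t (y t + Z t)) (at t)"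
    and Z_bounded: "bounded (range Z)"
  shows "Z = green (\<lambda>s. f s (y s + Z s))"
proof -
  define h where "h s = f s (y s + Z s)" for s
  have "continuous_on UNIV Z"
    using Z by (meson continuous_at_imp_continuous_on has_vector_derivative_continuous)
  with y have h_dominated: "rate_dominated \<beta> h"
    unfolding h_def[abs_def] by (intro rate_dominated_perturbation continuous_on_add)
  have "Z t - green h t = 0" for t
  proof (rule bounded_linear_solution_eq_0[where W = "\<lambda>t. Z t - green h t"])
    show "((\<lambda>t. Z t - green h t) has_vector_derivative A t *v (Z t - green h t)) (at t)" for t
      using has_vector_derivative_diff[OF Z green_has_vector_derivative[OF h_dominated]]
      by (simp add: h_def matrix_vector_mult_diff_distrib)
    obtain B where B: "\<And>t. norm (Z t) \<le> B"
      using Z_bounded by (auto simp: bounded_iff)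
    have "norm (Z t - green h t) \<le> B + 2 * \<beta> * K / \<alpha>" for t
      using norm_triangle_ineq4[of "Z t" "green h t"] B[of t] green_bound[OF h_dominated, of t]
      by linarith
    then show "bounded (range (\<lambda>t. Z t - green h t))"
      by (auto simp: bounded_iff)
  qed
  then have "Z = green h"
    by (simp add: fun_eq_iff)
  then show ?thesis
    unfolding h_def[abs_def] .
qed

lemma ex1_bounded_solution:
  assumes y: "continuous_on UNIV y"
  shows "\<exists>!Z. (\<forall>t. (Z has_vector_derivative A t *v Z t + f t (y t + Z t)) (at t)) \<and> bounded (range Z)"
proof -
  have "0 \<le> 2 * K * \<gamma> / \<alpha>"
    using K_pos alpha_pos gamma_nonneg by simp
  then have "\<exists>!X. perturbed_green y X = X"
    using perturbed_green_contraction[OF y] by (intro banach_fix_type[OF _ contraction]) auto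
  then obtain X where X: "perturbed_green y X = X"
    and X_unique: "\<And>X'. perturbed_green y X' = X' \<Longrightarrow> X' = X"
    by blast
  show ?thesis
  proof (rule ex1I[of _ "apply_bcontfun X"], intro conjI allI)
    have X_eq: "apply_bcontfun X = green (\<lambda>s. f s (y s + X s))"
      by (metis X apply_perturbed_green[OF y])
    have "rate_dominated \<beta> (\<lambda>s. f s (y s + X s))"
      by (intro rate_dominated_perturbation continuous_intros y continuous_on_apply_bcontfun)
    from green_has_vector_derivative[OF this]
    show "(apply_bcontfun X has_vector_derivative A t *v X t + f t (y t + X t)) (at t)" for t
      unfolding X_eq[symmetric] .
  next
    fix Z assume Z: "(\<forall>t. (Z has_vector_derivative A t *v Z t + f t (y t + Z t)) (at t)) \<and> bounded (range Z)"
    then have "continuous_on UNIV Z"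
      by (meson continuous_at_imp_continuous_on has_vector_derivative_continuous)
    with Z have Z_bcontfun: "Z \<in> bcontfun"
      by (simp add: bcontfun_def)
    have "green (\<lambda>s. f s (y s + Z s)) = Z"
      using Z by (intro bounded_solution_eq_green[symmetric] y) auto
    then have "perturbed_green y (Bcontfun Z) = Bcontfun Z"
      unfolding perturbed_green_def Bcontfun_inverse[OF Z_bcontfun] by simp
    then show "Z = apply_bcontfun X"
      using X_unique Bcontfun_inverse[OF Z_bcontfun] by metis
  qed (rule bounded_apply_bcontfun)
qed

lemma gsol_has_vector_derivative:
  "(gsol A f T \<tau> \<xi> has_vector_derivative
      A t *v gsol A f T \<tau> \<xi> t + f t (Ysol T t \<tau> \<xi> + gsol A f T \<tau> \<xi> t)) (at t)"
proof -
  have "continuous_on UNIV (\<lambda>t. Ysol T t \<tau> \<xi>)"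
    by (rule continuous_at_imp_continuous_on)
      (blast intro: has_vector_derivative_continuous Ysol_has_vector_derivative)
  from theI'[OF ex1_bounded_solution[OF this]] show ?thesis
    unfolding gsol_def by blast
qed

end

theorem lemma3p6:
  fixes A :: "real \<Rightarrow> real^'n^'n"
    and T :: "real \<Rightarrow> real \<Rightarrow> real^'n^'n"
    and \<mu> :: "real \<Rightarrow> real"
    and P :: "real \<Rightarrow> real^'n^'n"
    and K \<alpha> \<beta> \<gamma> :: real
    and f :: "real \<Rightarrow> real^'n \<Rightarrow> real^'n"
    and t0 :: real and y0 :: "real^'n"
  assumes A_cont: "continuous_on UNIV A"
    and A_bdd: "bounded (range A)"
    and T_id: "\<And>s. T s s = mat 1"
    and T_deriv: "\<And>t s. ((\<lambda>t. T t s) has_vector_derivative (A t ** T t s)) (at t)"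
    and mu_pos: "\<And>t. \<mu> t > 0"
    and mu_mono: "mono \<mu>"
    and mu_diff: "\<And>t. \<mu> differentiable (at t)"
    and mu_0: "\<mu> 0 = 1"
    and mu_bot: "(\<mu> \<longlongrightarrow> 0) at_bot"
    and mu_top: "filterlim \<mu> at_top at_top"
    and P_proj: "\<And>s. P s ** P s = P s"
    and K_pos: "K > 0" and alpha_pos: "\<alpha> > 0"
    and P_inv: "\<And>t s. T t s ** P s = P t ** T t s"
    and dich_P: "\<And>t s. t \<ge> s \<Longrightarrow> opnorm (T t s ** P s) \<le> K * (\<mu> t / \<mu> s) powr (-\<alpha>)"
    and dich_Q: "\<And>t s. t \<le> s \<Longrightarrow> opnorm (T t s ** (mat 1 - P s)) \<le> K * (\<mu> s / \<mu> t) powr (-\<alpha>)"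
    and f_cont: "continuous_on UNIV (\<lambda>(t, x). f t x)"
    and beta_nonneg: "\<beta> \<ge> 0" and gamma_nonneg: "\<gamma> \<ge> 0"
    and f_bdd: "\<And>t x. norm (f t x) \<le> \<beta> * deriv \<mu> t * inverse (\<mu> t)"
    and f_lip: "\<And>t x1 x2. norm (f t x1 - f t x2) \<le> \<gamma> * deriv \<mu> t * inverse (\<mu> t) * norm (x1 - x2)"
    and small: "6 * K * \<gamma> / \<alpha> < 1"
  shows "\<forall>t. ((\<lambda>t. Gmap A f T t (Ysol T t t0 y0)) has_vector_derivative
            (A t *v Gmap A f T t (Ysol T t t0 y0) + f t (Gmap A f T t (Ysol T t t0 y0)))) (at t)"
proof -
  have "2 * K * \<gamma> / \<alpha> \<le> 6 * K * \<gamma> / \<alpha>"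
    using K_pos alpha_pos gamma_nonneg by (simp add: divide_right_mono)
  with small have contraction: "2 * K * \<gamma> / \<alpha> < 1" by linarith
  interpret lipschitz_perturbation A T \<mu> P K \<alpha> f \<beta> \<gamma>
    by unfold_locales
      (fact A_bdd T_id T_deriv mu_pos mu_mono mu_diff mu_bot mu_top K_pos alpha_pos P_inv
        dich_P dich_Q f_cont f_bdd f_lip gamma_nonneg contraction)+
  have G_eq: "Gmap A f T t (Ysol T t t0 y0) = Ysol T t t0 y0 + gsol A f T t0 y0 t" for t
    by (simp add: Gmap_def gsol_along_solution)
  show ?thesis
    unfolding G_eq
    using has_vector_derivative_add[OF Ysol_has_vector_derivative gsol_has_vector_derivative, of t0 y0 t0 y0]
    by (simp add: matrix_vector_right_distrib add.assoc)
qed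

end
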